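(* Let $k$ be an infinite field with $\operatorname{char}k\neq 2$, let $a\in k\setminus k^2$, let $b_1,\dots,b_n\in k\setminus\{0\}$, and let $L_0=k(s_i,t_i:1\le i\le n)$ be a field extension of $k$ with $\operatorname{trdeg}_k(L_0)=n$ satisfying $s_i^2-at_i^2=b_i$ for $1\le i\le n$. Then $L_0$ is $k$-rational (respectively, stably $k$-rational, $k$-unirational) if and only if $(a,b_i)_{2,k}=0$ for all $1\le i\le n$.
   Context: A finitely generated field extension $L/k$ is $k$-rational if it is purely transcendental over $k$; stably $k$-rational if $L(y_1,\dots,y_m)$ is $k$-rational for some $y_1,\dots,y_m$ algebraically independent over $L$; $k$-unirational if $L$ is $k$-isomorphic to a subfield of a $k$-rational field. $(u,v)_{2,k}$ is the class in $\mathrm{Br}(k)$ of the quaternion algebra generated over $k$ by $U,V$ with $U^2=u$, $V^2=v$, $UV=-VU$; it is $0$ iff there exist $x,y\in k$ with $ux^2+vy^2=1$. *)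

theory Defs
  imports Main "HOL-Library.Poly_Mapping" "HOL-Computational_Algebra.Fraction_Field"
    "HOL-Computational_Algebra.Polynomial"
begin

definition is_subfield :: "'K::field set \<Rightarrow> bool" where
  "is_subfield F \<longleftrightarrow> 0 \<in> F \<and> 1 \<in> F \<and>
     (\<forall>x\<in>F. \<forall>y\<in>F. x + y \<in> F \<and> x - y \<in> F \<and> x * y \<in> F) \<and>
     (\<forall>x\<in>F. inverse x \<in> F)"

text \<open>The subfield generated by a set S (the smallest subfield containing S);
  k(S) is written gen_field (k \<union> S).\<close>
definition gen_field :: "'K::field set \<Rightarrow> 'K set" where
  "gen_field S = \<Inter>{F. is_subfield F \<and> S \<subseteq> F}"

text \<open>A monomial is an exponent function e with finite support contained in B.\<close>
definition alg_indep :: "'K::field set \<Rightarrow> 'K set \<Rightarrow> bool" where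
  "alg_indep F B \<longleftrightarrow>
     (\<forall>(E :: ('K \<Rightarrow> nat) set) (c :: ('K \<Rightarrow> nat) \<Rightarrow> 'K).
        finite E \<longrightarrow>
        (\<forall>e\<in>E. finite {x. e x \<noteq> 0} \<and> {x. e x \<noteq> 0} \<subseteq> B \<and> c e \<in> F) \<longrightarrow>
        (\<Sum>e\<in>E. c e * (\<Prod>x\<in>{x. e x \<noteq> 0}. x ^ e x)) = 0 \<longrightarrow>
        (\<forall>e\<in>E. c e = 0))"

definition algebraic_over :: "'K::field set \<Rightarrow> 'K \<Rightarrow> bool" where
  "algebraic_over F x \<longleftrightarrow> (\<exists>p. p \<noteq> 0 \<and> (\<forall>i. coeff p i \<in> F) \<and> poly p x = 0)"

definition has_trdeg :: "'K::field set \<Rightarrow> 'K set \<Rightarrow> nat \<Rightarrow> bool" where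
  "has_trdeg k L n \<longleftrightarrow> (\<exists>B. B \<subseteq> L \<and> finite B \<and> card B = n \<and> alg_indep k B \<and>
       (\<forall>x\<in>L. algebraic_over (gen_field (k \<union> B)) x))"

definition k_rational :: "'K::field set \<Rightarrow> 'K set \<Rightarrow> bool" where
  "k_rational k L \<longleftrightarrow> (\<exists>B. finite B \<and> alg_indep k B \<and> L = gen_field (k \<union> B))"

text \<open>A canonical big field over 'K: the fraction field of the polynomial ring over 'K
  in countably many indeterminates X_0, X_1, ...  It contains a copy of every
  field L(y_1,...,y_m) (L a subfield of 'K, y_i independent indeterminates) and of
  every finitely generated purely transcendental extension of a subfield k of 'K.\<close>
type_synonym 'K bigfield = "((nat \<Rightarrow>\<^sub>0 nat) \<Rightarrow>\<^sub>0 'K) fract"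

definition bconst :: "'K::field \<Rightarrow> 'K bigfield" where
  "bconst c = Fraction_Field.Fract (Poly_Mapping.single 0 c) 1"

definition stably_k_rational :: "'K::field set \<Rightarrow> 'K set \<Rightarrow> bool" where
  "stably_k_rational k L \<longleftrightarrow>
     (\<exists>Y :: 'K bigfield set. finite Y \<and> alg_indep (bconst ` L) Y \<and>
        k_rational (bconst ` k) (gen_field (bconst ` L \<union> Y)))"

definition k_unirational :: "'K::field set \<Rightarrow> 'K set \<Rightarrow> bool" where
  "k_unirational k L \<longleftrightarrow>
     (\<exists>(R :: 'K bigfield set) (f :: 'K \<Rightarrow> 'K bigfield).
        k_rational (bconst ` k) R \<and> inj_on f L \<and> f ` L \<subseteq> R \<and>
        (\<forall>x\<in>L. \<forall>y\<in>L. f (x + y) = f x + f y \<and> f (x * y) = f x * f y) \<and>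
        (\<forall>c\<in>k. f c = bconst c))"

text \<open>(u,v)_{2,k} = 0 in Br(k), via the characterization given in the paper's context:
  there are x, y in k with u x^2 + v y^2 = 1.\<close>
definition quat_class_zero :: "'K::field set \<Rightarrow> 'K \<Rightarrow> 'K \<Rightarrow> bool" where
  "quat_class_zero k u v \<longleftrightarrow> (\<exists>x\<in>k. \<exists>y\<in>k. u * x^2 + v * y^2 = 1)"

end

theory Submission
  imports Defs "HOL-Algebra.Finite_Extensions"
begin

text \<open>
  If L_0 is k-unirational, a k-embedding into a purely transcendental extension k(B)
  maps (s_i, t_i) to a point of the conic x^2 - a y^2 = b_i over k(B); as k is infinite,
  this point specialises to a k-point, and the conic has a k-point iff (a, b_i) = 0.
  Conversely, let (p_i, q_i) be k-points. Each t_i is algebraic over k(s_1, ..., s_n), so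
  trdeg L_0 = n makes s_1, ..., s_n algebraically independent and in particular s_i \<noteq> p_i.
  Projecting the conic from (p_i, q_i) gives L_0 = k(u_1, ..., u_n) with slopes
  u_i = (t_i - q_i)/(s_i - p_i), and n generators of a field of transcendence degree n are
  algebraically independent.
\<close>

hide_const (open) Polynomials.degree Polynomials.lead_coeff up_ring.coeff up_ring.monom

lemma subfield_0: "is_subfield F \<Longrightarrow> 0 \<in> F"
  and subfield_1: "is_subfield F \<Longrightarrow> 1 \<in> F"
  and subfield_add: "is_subfield F \<Longrightarrow> x \<in> F \<Longrightarrow> y \<in> F \<Longrightarrow> x + y \<in> F"
  and subfield_diff: "is_subfield F \<Longrightarrow> x \<in> F \<Longrightarrow> y \<in> F \<Longrightarrow> x - y \<in> F"
  and subfield_mult: "is_subfield F \<Longrightarrow> x \<in> F \<Longrightarrow> y \<in> F \<Longrightarrow> x * y \<in> F"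
  and subfield_inverse: "is_subfield F \<Longrightarrow> x \<in> F \<Longrightarrow> inverse x \<in> F"
  unfolding is_subfield_def by auto

lemma subfield_uminus: "is_subfield F \<Longrightarrow> x \<in> F \<Longrightarrow> - x \<in> F"
  using subfield_diff[of F 0 x] subfield_0 by auto

lemma subfield_divide: "is_subfield F \<Longrightarrow> x \<in> F \<Longrightarrow> y \<in> F \<Longrightarrow> x / y \<in> F"
  by (simp add: divide_inverse subfield_mult subfield_inverse)

lemma subfield_power: "is_subfield F \<Longrightarrow> x \<in> F \<Longrightarrow> x ^ n \<in> F"
  by (induct n) (auto intro: subfield_1 subfield_mult)

lemma subfield_sum: "is_subfield F \<Longrightarrow> (\<And>i. i \<in> I \<Longrightarrow> f i \<in> F) \<Longrightarrow> sum f I \<in> F"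
  by (induct I rule: infinite_finite_induct) (auto intro: subfield_0 subfield_add)

lemma subfield_prod: "is_subfield F \<Longrightarrow> (\<And>i. i \<in> I \<Longrightarrow> f i \<in> F) \<Longrightarrow> prod f I \<in> F"
  by (induct I rule: infinite_finite_induct) (auto intro: subfield_1 subfield_mult)

lemma subfield_numeral: "is_subfield F \<Longrightarrow> numeral n \<in> F"
proof -
  assume F: "is_subfield F"
  have "of_nat m \<in> F" for m by (induct m) (auto intro: subfield_0 subfield_1 subfield_add F)
  from this[of "numeral n"] show ?thesis by simp
qed

lemma gen_field_subfield: "is_subfield (gen_field S)"
  unfolding gen_field_def is_subfield_def by auto

lemma gen_field_incl: "S \<subseteq> gen_field S"
  unfolding gen_field_def by auto

lemma gen_field_least: "is_subfield F \<Longrightarrow> S \<subseteq> F \<Longrightarrow> gen_field S \<subseteq> F"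
  unfolding gen_field_def by auto

lemma gen_field_mono: "S \<subseteq> T \<Longrightarrow> gen_field S \<subseteq> gen_field T"
  by (meson gen_field_incl gen_field_least gen_field_subfield order_trans)

lemma gen_field_idem: "is_subfield F \<Longrightarrow> gen_field F = F"
  by (simp add: gen_field_incl gen_field_least subset_antisym)

lemma gen_field_gen_field_Un: "gen_field (gen_field A \<union> C) = gen_field (A \<union> C)"
proof
  show "gen_field (gen_field A \<union> C) \<subseteq> gen_field (A \<union> C)"
    by (intro gen_field_least gen_field_subfield)
       (metis Un_least Un_upper1 Un_upper2 gen_field_incl gen_field_mono order_trans)
  show "gen_field (A \<union> C) \<subseteq> gen_field (gen_field A \<union> C)"
    by (intro gen_field_mono) (use gen_field_incl in blast)
qed

lemma gen_field_Un_eqI: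
  assumes "A \<subseteq> gen_field (F \<union> B)" and "B \<subseteq> gen_field (F \<union> A)"
  shows "gen_field (F \<union> A) = gen_field (F \<union> B)"
  using assms gen_field_incl[of "F \<union> A"] gen_field_incl[of "F \<union> B"]
  by (intro subset_antisym gen_field_least gen_field_subfield) auto

lemma algebraic_over_mono: "F \<subseteq> G \<Longrightarrow> algebraic_over F x \<Longrightarrow> algebraic_over G x"
  unfolding algebraic_over_def by blast

lemma algebraic_over_root:
  assumes "is_subfield F" and "c \<in> F" and "x ^ n = c" and "n > 0"
  shows "algebraic_over F x"
  unfolding algebraic_over_def
proof (intro exI conjI allI)
  show "monom 1 n - [:c:] \<noteq> 0"
    using \<open>n > 0\<close> by (metis coeff_diff coeff_monom coeff_pCons_0 diff_0_right
        neq0_conv one_neq_zero pCons_0_0 coeff_0 coeff_pCons_Suc gr0_implies_Suc)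
  show "coeff (monom 1 n - [:c:]) i \<in> F" for i
    using assms by (cases i) (auto simp: coeff_monom intro: subfield_0 subfield_1 subfield_uminus)
  show "poly (monom 1 n - [:c:]) x = 0"
    using assms by (simp add: poly_monom)
qed

lemma algebraic_over_mem: "is_subfield F \<Longrightarrow> x \<in> F \<Longrightarrow> algebraic_over F x"
  by (rule algebraic_over_root[where n = 1]) auto

text \<open>Transitivity of algebraicity is imported from HOL-Algebra, which works with
  subfields of a ring structure: view the type itself as such a ring.\<close>

definition UNIV_ring :: "'a::field ring" where
  "UNIV_ring = \<lparr>carrier = UNIV, monoid.mult = (*), one = 1, ring.zero = 0, add = (+)\<rparr>"

lemma UNIV_ring_simps [simp]:
  "carrier UNIV_ring = UNIV" "monoid.mult UNIV_ring = (*)" "one UNIV_ring = 1"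
  "zero UNIV_ring = 0" "add UNIV_ring = (+)"
  by (simp_all add: UNIV_ring_def)

lemma field_UNIV_ring: "field (UNIV_ring :: 'a::field ring)"
proof -
  have "\<exists>y. x + y = 0" for x :: 'a
    using add.right_inverse by blast
  moreover have "x \<noteq> 0 \<Longrightarrow> \<exists>y. x * y = 1" for x :: 'a
    by (rule exI[of _ "inverse x"]) auto
  ultimately show ?thesis
    unfolding UNIV_ring_def by unfold_locales (auto simp: algebra_simps Units_def)
qed

lemma domain_UNIV_ring: "domain (UNIV_ring :: 'a::field ring)"
  using field_UNIV_ring field.axioms(1) by blast

lemma ring_UNIV_ring: "ring (UNIV_ring :: 'a::field ring)"
  using domain_UNIV_ring domain_def cring_def by blast

lemma UNIV_ring_nat_pow [simp]: "x [^]\<^bsub>UNIV_ring\<^esub> (n::nat) = x ^ n"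
  by (induct n) (simp_all add: mult.commute)

lemma UNIV_ring_inv [simp]: "x \<noteq> (0::'a::field) \<Longrightarrow> inv\<^bsub>UNIV_ring\<^esub> x = inverse x"
  by (rule monoid.inv_char[OF ring.is_monoid[OF ring_UNIV_ring]]) auto

lemma UNIV_ring_uminus [simp]: "\<ominus>\<^bsub>UNIV_ring\<^esub> (x::'a::field) = - x"
  by (rule abelian_group.minus_equality[OF ring.is_abelian_group[OF ring_UNIV_ring]]) auto

lemma subfield_UNIV_ring_iff: "subfield K (UNIV_ring :: 'a::field ring) \<longleftrightarrow> is_subfield K"
proof
  assume K: "subfield K UNIV_ring"
  have sr: "subring K UNIV_ring" using subfieldE(1)[OF K] .
  have inv: "inverse x \<in> K" if "x \<in> K" for x
  proof (cases "x = 0")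
    case True thus ?thesis using subringE(2)[OF sr] by simp
  next
    case False
    then have "inv\<^bsub>UNIV_ring\<^esub> x \<in> K"
      using K that ring.subfield_m_inv(1)[OF ring_UNIV_ring] by fastforce
    thus ?thesis using False by simp
  qed
  have "x - y \<in> K" if "x \<in> K" "y \<in> K" for x y
    using subringE(7)[OF sr that(1) subringE(5)[OF sr that(2)]] by simp
  with inv subringE(2,3,6,7)[OF sr] show "is_subfield K"
    unfolding is_subfield_def by simp
next
  assume F: "is_subfield K"
  show "subfield K UNIV_ring"
  proof (rule field.subfieldI'[OF field_UNIV_ring])
    show "subring K UNIV_ring"
      by (rule ring.subringI[OF ring_UNIV_ring])
         (auto intro: subfield_1 subfield_uminus subfield_mult subfield_add F)
    show "inv\<^bsub>UNIV_ring\<^esub> k \<in> K" if "k \<in> K - {\<zero>\<^bsub>UNIV_ring\<^esub>}" for k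
      using that subfield_inverse[OF F] by auto
  qed
qed

lemma eval_UNIV_ring: "ring.eval UNIV_ring l x = poly (Poly (rev l)) x"
proof (induct l)
  case Nil
  then show ?case by (simp add: ring.eval.simps[OF ring_UNIV_ring])
next
  case (Cons c l)
  have "poly (Poly (xs @ [c])) x = poly (Poly xs) x + c * x ^ length xs" for xs
    by (induct xs) (auto simp: algebra_simps)
  with Cons show ?case
    by (simp add: ring.eval.simps[OF ring_UNIV_ring] add.commute)
qed

lemma algebraic_over_iff_algebraic:
  assumes K: "is_subfield K"
  shows "algebraic_over K x \<longleftrightarrow> (ring.algebraic UNIV_ring over K) x"
proof
  assume "algebraic_over K x"
  then obtain p where p: "p \<noteq> 0" "\<forall>i. coeff p i \<in> K" "poly p x = 0"
    unfolding algebraic_over_def by blast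
  let ?l = "rev (coeffs p)"
  have "?l \<in> carrier (K[X]\<^bsub>UNIV_ring\<^esub>)"
    using p unfolding univ_poly_def polynomial_def
    by (auto simp: hd_rev last_coeffs_eq_coeff_degree coeffs_def)
  moreover have "?l \<noteq> []" using p by simp
  moreover have "ring.eval UNIV_ring ?l x = \<zero>\<^bsub>UNIV_ring\<^esub>" using p by (simp add: eval_UNIV_ring)
  ultimately show "(ring.algebraic UNIV_ring over K) x"
    using ring.algebraicI[OF ring_UNIV_ring] unfolding over_def by blast
next
  have sr: "subring K UNIV_ring" using K subfield_UNIV_ring_iff subfieldE(1) by blast
  assume "(ring.algebraic UNIV_ring over K) x"
  then obtain l where l: "l \<in> carrier (K[X]\<^bsub>UNIV_ring\<^esub>)" "l \<noteq> []"
      "ring.eval UNIV_ring l x = \<zero>\<^bsub>UNIV_ring\<^esub>"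
    using domain.algebraicE[OF domain_UNIV_ring sr] unfolding over_def by auto
  have hd: "hd l \<noteq> 0" "set l \<subseteq> K" using l(1,2) unfolding univ_poly_def polynomial_def by auto
  let ?p = "Poly (rev l)"
  have "coeff ?p (length l - 1) = hd l"
    using l(2) by (simp add: nth_default_def rev_nth hd_conv_nth)
  then have "?p \<noteq> 0" using hd(1) by (intro notI) simp
  moreover have "coeff ?p i \<in> K" for i
    using hd(2) nth_mem[of i "rev l"] subfield_0[OF K] by (auto simp: nth_default_def)
  moreover have "poly ?p x = 0" using l(3) by (simp add: eval_UNIV_ring)
  ultimately show "algebraic_over K x" unfolding algebraic_over_def by blast
qed

lemma subfield_algebraic_over:
  assumes "is_subfield G"
  shows "is_subfield {x. algebraic_over G x}"
proof -
  have "subfield {x \<in> carrier UNIV_ring. (ring.algebraic UNIV_ring over G) x} UNIV_ring"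
    using field.subfield_of_algebraics[OF field_UNIV_ring] assms subfield_UNIV_ring_iff by blast
  moreover have "{x \<in> carrier UNIV_ring. (ring.algebraic UNIV_ring over G) x} = {x. algebraic_over G x}"
    using algebraic_over_iff_algebraic[OF assms] by auto
  ultimately show ?thesis using subfield_UNIV_ring_iff by metis
qed

lemma algebraic_over_if_finite_dimension:
  assumes G: "is_subfield G" and K: "is_subfield K"
    and fd: "ring.finite_dimension UNIV_ring G K" and x: "algebraic_over K x"
  shows "algebraic_over G x"
proof -
  have sfG: "subfield G UNIV_ring" and sfK: "subfield K UNIV_ring"
    using G K subfield_UNIV_ring_iff by blast+
  have "(ring.algebraic UNIV_ring over K) x" using x algebraic_over_iff_algebraic[OF K] by blast
  then have "ring.finite_dimension UNIV_ring K (ring.simple_extension UNIV_ring K x)"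
    using domain.finite_dimension_simple_extension[OF domain_UNIV_ring sfK] by simp
  then have fd': "ring.finite_dimension UNIV_ring G (ring.simple_extension UNIV_ring K x)"
    by (rule ring.telescopic_base_dim(1)[OF ring_UNIV_ring sfG sfK fd])
  have sub: "subring (ring.simple_extension UNIV_ring K x) UNIV_ring"
    by (rule domain.simple_extension_is_subring[OF domain_UNIV_ring subfieldE(1)[OF sfK]]) simp
  have mem: "x \<in> ring.simple_extension UNIV_ring K x"
    by (rule ring.simple_extension_mem[OF ring_UNIV_ring subfieldE(1)[OF sfK]]) simp
  have "(ring.algebraic UNIV_ring over G) x"
    by (rule ring.finite_dimension_imp_algebraic[OF ring_UNIV_ring sfG sub fd' mem])
  then show ?thesis using algebraic_over_iff_algebraic[OF G] by blast
qed

text \<open>The coefficients of a polynomial killing x generate a finite extension of G.\<close>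

lemma algebraic_over_trans:
  assumes G: "is_subfield G" and E: "E \<subseteq> {x. algebraic_over G x}"
    and x: "algebraic_over E x"
  shows "algebraic_over G x"
proof -
  obtain p where p: "p \<noteq> 0" "\<forall>i. coeff p i \<in> E" "poly p x = 0"
    using x unfolding algebraic_over_def by blast
  define cs where "cs = coeffs p"
  have sfG: "subfield G UNIV_ring" using G subfield_UNIV_ring_iff by blast
  have csalg: "(ring.algebraic UNIV_ring over G) c" if "c \<in> set cs" for c
  proof -
    have "c \<in> E" using p(2) that by (auto simp: cs_def coeffs_def split: if_splits)
    then show ?thesis using E algebraic_over_iff_algebraic[OF G] by auto
  qed
  define K where "K = ring.finite_extension UNIV_ring G cs"
  have K: "is_subfield K"
    unfolding K_def subfield_UNIV_ring_iff[symmetric]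
    by (rule domain.finite_extension_is_subfield[OF domain_UNIV_ring sfG]) (use csalg in auto)
  have fd: "ring.finite_dimension UNIV_ring G K"
    unfolding K_def
    by (rule domain.finite_extension_finite_dimension(1)[OF domain_UNIV_ring sfG]) (use csalg in auto)
  have csK: "set cs \<subseteq> K"
    unfolding K_def
    by (rule domain.finite_extension_mem[OF domain_UNIV_ring subfieldE(1)[OF sfG]]) auto
  have "coeff p i \<in> K" for i
  proof (cases "i \<le> degree p")
    case True
    then have "coeff p i \<in> set cs" unfolding cs_def
      by (metis coeffs_nth length_coeffs_degree less_Suc_eq_le nth_mem p(1))
    then show ?thesis using csK by auto
  next
    case False
    then show ?thesis using subfield_0[OF K] by (simp add: coeff_eq_0)
  qed
  with p have "algebraic_over K x" unfolding algebraic_over_def by blast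
  then show ?thesis by (rule algebraic_over_if_finite_dimension[OF G K fd])
qed

definition poly_over :: "'a::field set \<Rightarrow> 'a poly \<Rightarrow> bool" where
  "poly_over F p \<longleftrightarrow> (\<forall>i. coeff p i \<in> F)"

lemma poly_over_add: "is_subfield F \<Longrightarrow> poly_over F p \<Longrightarrow> poly_over F q \<Longrightarrow> poly_over F (p + q)"
  and poly_over_diff: "is_subfield F \<Longrightarrow> poly_over F p \<Longrightarrow> poly_over F q \<Longrightarrow> poly_over F (p - q)"
  and poly_over_mult: "is_subfield F \<Longrightarrow> poly_over F p \<Longrightarrow> poly_over F q \<Longrightarrow> poly_over F (p * q)"
  unfolding poly_over_def by (auto simp: coeff_mult intro!: subfield_sum subfield_mult
      subfield_add subfield_diff)

lemma poly_over_const: "is_subfield F \<Longrightarrow> c \<in> F \<Longrightarrow> poly_over F [:c:]"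
  and poly_over_X: "is_subfield F \<Longrightarrow> poly_over F [:0, 1:]"
  unfolding poly_over_def by (auto simp: coeff_pCons subfield_0 subfield_1 split: nat.splits)

lemma poly_over_one: "is_subfield F \<Longrightarrow> poly_over F 1"
  using poly_over_const[of F 1] subfield_1[of F] by (simp add: one_pCons)

lemma poly_over_power: "is_subfield F \<Longrightarrow> poly_over F p \<Longrightarrow> poly_over F (p ^ n)"
  by (induct n) (auto intro: poly_over_one poly_over_mult)

lemma poly_over_prod:
  "is_subfield F \<Longrightarrow> (\<And>i. i \<in> I \<Longrightarrow> poly_over F (f i)) \<Longrightarrow> poly_over F (prod f I)"
  by (induct I rule: infinite_finite_induct) (auto intro: poly_over_one poly_over_mult)

lemma poly_over_poly_mem: "is_subfield F \<Longrightarrow> poly_over F p \<Longrightarrow> x \<in> F \<Longrightarrow> poly p x \<in> F"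
  unfolding poly_over_def poly_altdef by (auto intro!: subfield_sum subfield_mult subfield_power)

definition rational_values :: "'a::field set \<Rightarrow> 'a \<Rightarrow> 'a set" where
  "rational_values F x =
     {poly p x / poly q x | p q. poly_over F p \<and> poly_over F q \<and> poly q x \<noteq> 0}"

lemma rational_valuesI:
  "poly_over F p \<Longrightarrow> poly_over F q \<Longrightarrow> poly q x \<noteq> 0 \<Longrightarrow> u = poly p x / poly q x
    \<Longrightarrow> u \<in> rational_values F x"
  unfolding rational_values_def by blast

lemma subfield_rational_values:
  assumes F: "is_subfield F"
  shows "is_subfield (rational_values F x)"
  unfolding is_subfield_def
proof (intro conjI ballI)
  have one: "poly_over F 1" by (rule poly_over_one[OF F])
  show z: "0 \<in> rational_values F x"
    by (rule rational_valuesI[of _ 0 1]) (use one in \<open>auto simp: poly_over_def subfield_0 F\<close>)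
  show "1 \<in> rational_values F x" by (rule rational_valuesI[of _ 1 1]) (auto simp: one)
  fix u v assume "u \<in> rational_values F x" "v \<in> rational_values F x"
  then obtain p1 q1 p2 q2 where
    u: "u = poly p1 x / poly q1 x" "poly_over F p1" "poly_over F q1" "poly q1 x \<noteq> 0" and
    v: "v = poly p2 x / poly q2 x" "poly_over F p2" "poly_over F q2" "poly q2 x \<noteq> 0"
    unfolding rational_values_def by blast
  show "u + v \<in> rational_values F x"
    unfolding u(1) v(1) by (rule rational_valuesI[of _ "p1 * q2 + p2 * q1" "q1 * q2"])
       (use u(2-4) v(2-4) in \<open>auto simp: field_simps intro!: poly_over_add poly_over_mult F\<close>)
  show "u - v \<in> rational_values F x"
    unfolding u(1) v(1) by (rule rational_valuesI[of _ "p1 * q2 - p2 * q1" "q1 * q2"])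
       (use u(2-4) v(2-4) in \<open>auto simp: field_simps intro!: poly_over_diff poly_over_mult F\<close>)
  show "u * v \<in> rational_values F x"
    unfolding u(1) v(1) by (rule rational_valuesI[of _ "p1 * p2" "q1 * q2"])
       (use u(2-4) v(2-4) in \<open>auto simp: field_simps intro!: poly_over_mult F\<close>)
  show "inverse u \<in> rational_values F x"
  proof (cases "poly p1 x = 0")
    case True
    then show ?thesis using z u by simp
  next
    case False
    then show ?thesis using rational_valuesI[of F q1 p1] u by auto
  qed
qed

lemma gen_field_insert_rational_values:
  assumes F: "is_subfield F" and u: "u \<in> gen_field (F \<union> {x})"
  obtains p q where "poly_over F p" "poly_over F q" "poly q x \<noteq> 0" "u = poly p x / poly q x"
proof -
  have "F \<subseteq> rational_values F x"
    using rational_valuesI[OF poly_over_const[OF F] poly_over_one[OF F]] by auto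
  moreover have "x \<in> rational_values F x"
    by (rule rational_valuesI[OF poly_over_X[OF F] poly_over_one[OF F]]) auto
  ultimately have "gen_field (F \<union> {x}) \<subseteq> rational_values F x"
    by (intro gen_field_least subfield_rational_values F) auto
  with u that show ?thesis unfolding rational_values_def by blast
qed

definition power_product :: "('a \<Rightarrow> nat) \<Rightarrow> 'a::field" where
  "power_product e = (\<Prod>x\<in>{x. e x \<noteq> 0}. x ^ e x)"

lemma alg_indepI:
  assumes "\<And>E c e0. finite E \<Longrightarrow>
      (\<forall>e\<in>E. finite {x. e x \<noteq> 0} \<and> {x. e x \<noteq> 0} \<subseteq> B \<and> c e \<in> F) \<Longrightarrow>
      (\<Sum>e\<in>E. c e * power_product e) = 0 \<Longrightarrow> e0 \<in> E \<Longrightarrow> c e0 = 0"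
  shows "alg_indep F B"
  unfolding alg_indep_def using assms unfolding power_product_def by blast

lemma alg_indepD:
  assumes "alg_indep F B" "finite E"
    "\<forall>e\<in>E. finite {x. e x \<noteq> 0} \<and> {x. e x \<noteq> 0} \<subseteq> B \<and> c e \<in> F"
    "(\<Sum>e\<in>E. c e * power_product e) = 0" "e0 \<in> E"
  shows "c e0 = 0"
  using assms unfolding alg_indep_def power_product_def by blast

lemma alg_indep_mono: "alg_indep F B \<Longrightarrow> B' \<subseteq> B \<Longrightarrow> alg_indep F B'"
  by (rule alg_indepI) (erule alg_indepD, auto)

lemma alg_indep_empty: "alg_indep F {}"
proof (rule alg_indepI)
  fix E c e0
  assume "\<forall>e\<in>E. finite {x. e x \<noteq> 0} \<and> {x. e x \<noteq> 0} \<subseteq> {} \<and> c e \<in> F"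
    and s: "(\<Sum>e\<in>E. c e * power_product e) = 0" and e0: "e0 \<in> E"
  then have "e = (\<lambda>_. 0)" if "e \<in> E" for e using that by auto
  then have "E = {\<lambda>_. 0}" using e0 by auto
  then show "c e0 = 0" using s e0 by (simp add: power_product_def)
qed

lemma power_product_fun_upd:
  assumes "finite {x. e x \<noteq> 0}" "e g = 0"
  shows "power_product (e(g := i)) = g ^ i * power_product e"
proof -
  let ?S = "{x. e x \<noteq> 0}"
  have "power_product (e(g := i)) = (\<Prod>x\<in>insert g ?S. x ^ (e(g := i)) x)"
    unfolding power_product_def by (rule prod.mono_neutral_left) (use assms in auto)
  also have "\<dots> = g ^ i * (\<Prod>x\<in>?S. x ^ (e(g := i)) x)"
    using assms by simp
  also have "(\<Prod>x\<in>?S. x ^ (e(g := i)) x) = (\<Prod>x\<in>?S. x ^ e x)"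
    by (rule prod.cong) (use assms in auto)
  finally show ?thesis unfolding power_product_def .
qed

lemma power_product_mem: "is_subfield G \<Longrightarrow> {x. e x \<noteq> 0} \<subseteq> G \<Longrightarrow> power_product e \<in> G"
  unfolding power_product_def by (auto intro!: subfield_prod subfield_power)

lemma inj_on_fun_upd_const:
  assumes "\<And>e. e \<in> S \<Longrightarrow> e x = c"
  shows "inj_on (\<lambda>e. e(x := d)) S"
proof (rule inj_onI)
  fix e e' assume e: "e \<in> S" "e' \<in> S" and eq: "e(x := d) = e'(x := d)"
  show "e = e'"
  proof
    fix y show "e y = e' y"
      using assms[OF e(1)] assms[OF e(2)] fun_cong[OF eq, of y] by (cases "y = x") auto
  qed
qed

lemma not_algebraic_if_alg_indep_singleton:
  assumes ai: "alg_indep F {b}"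
  shows "\<not> algebraic_over F b"
proof
  assume "algebraic_over F b"
  then obtain p where p: "p \<noteq> 0" "\<forall>i. coeff p i \<in> F" "poly p b = 0"
    unfolding algebraic_over_def by blast
  define h where "h i = (\<lambda>_. 0::nat)(b := i)" for i
  define c where "c e = coeff p (e b)" for e :: "'a \<Rightarrow> nat"
  have inj: "inj_on h {..degree p}" unfolding h_def inj_on_def by (metis fun_upd_same)
  have "(\<Sum>e\<in>h ` {..degree p}. c e * power_product e) = (\<Sum>i\<le>degree p. c (h i) * power_product (h i))"
    by (rule sum.reindex[OF inj, unfolded comp_def])
  also have "\<dots> = poly p b"
    using power_product_fun_upd[of "\<lambda>_. 0" b]
    by (simp add: poly_altdef c_def h_def power_product_def)
  finally have s: "(\<Sum>e\<in>h ` {..degree p}. c e * power_product e) = 0" using p(3) by simp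
  have supp: "{x. h i x \<noteq> 0} \<subseteq> {b}" for i unfolding h_def by auto
  have "c (h (degree p)) = 0"
    by (rule alg_indepD[OF ai _ _ s]) (use p(2) supp finite_subset[OF supp] in \<open>auto simp: c_def\<close>)
  then show False using p(1) unfolding c_def h_def by simp
qed

lemma inj_on_fun_upd_Times:
  assumes "\<And>e. e \<in> E \<Longrightarrow> e g = c"
  shows "inj_on (\<lambda>(e, i). e(g := i)) (E \<times> I)"
proof (rule inj_onI, clarify)
  fix e i e' i' assume e: "e \<in> E" "e' \<in> E" and eq: "e(g := i) = e'(g := i')"
  have "i = i'" using fun_cong[OF eq, of g] by simp
  moreover have "e = e'"
  proof
    fix z show "e z = e' z"
      using fun_cong[OF eq, of z] assms[OF e(1)] assms[OF e(2)] by (cases "z = g") auto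
  qed
  ultimately show "e = e' \<and> i = i'" by simp
qed

lemma poly_altdef_le:
  assumes "degree (p :: 'a::{comm_semiring_0,semiring_1} poly) \<le> N"
  shows "poly p x = (\<Sum>i\<le>N. coeff p i * x ^ i)"
  unfolding poly_altdef
  by (rule sum.mono_neutral_left) (use assms in \<open>auto simp: coeff_eq_0\<close>)

text \<open>Independence of insert g B over F means independence of B over the polynomial
  ring F[g]: the key step towards independence of B over the field F(g).\<close>

lemma alg_indep_insert_poly_coeffs:
  assumes g: "g \<notin> B" and ai: "alg_indep F (insert g B)" and E: "finite E"
    and exps: "\<forall>e\<in>E. finite {x. e x \<noteq> 0} \<and> {x. e x \<noteq> 0} \<subseteq> B"
    and P: "\<forall>e\<in>E. poly_over F (P e)"
    and s: "(\<Sum>e\<in>E. poly (P e) g * power_product e) = 0"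
    and e0: "e0 \<in> E"
  shows "P e0 = 0"
proof -
  have eg: "e g = 0" if "e \<in> E" for e using exps that g by auto
  define N where "N = Max ((\<lambda>e. degree (P e)) ` E)"
  have deg: "degree (P e) \<le> N" if "e \<in> E" for e
    unfolding N_def using E that by simp
  define h where "h = (\<lambda>(e::'a \<Rightarrow> nat, i::nat). e(g := i))"
  have inj: "inj_on h (E \<times> {..N})"
    unfolding h_def by (rule inj_on_fun_upd_Times) (use eg in blast)
  define c where "c e' = coeff (P (e'(g := 0))) (e' g)" for e'
  have ch: "c (h (e, i)) = coeff (P e) i" if "e \<in> E" for e i
    unfolding c_def h_def using eg[OF that] by (simp add: fun_upd_idem)
  have ph: "power_product (h (e, i)) = g ^ i * power_product e" if "e \<in> E" for e i
    unfolding h_def using power_product_fun_upd[of e g i] exps eg that by auto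
  have "0 = (\<Sum>e\<in>E. \<Sum>i\<le>N. coeff (P e) i * (g ^ i * power_product e))"
    unfolding s[symmetric]
    by (rule sum.cong) (auto simp: poly_altdef_le[OF deg] sum_distrib_left sum_distrib_right ac_simps)
  also have "\<dots> = (\<Sum>x\<in>E \<times> {..N}. c (h x) * power_product (h x))"
    unfolding sum.cartesian_product by (rule sum.cong) (auto simp: ch ph)
  also have "\<dots> = (\<Sum>e'\<in>h ` (E \<times> {..N}). c e' * power_product e')"
    by (rule sum.reindex[OF inj, unfolded comp_def, symmetric])
  finally have s': "(\<Sum>e'\<in>h ` (E \<times> {..N}). c e' * power_product e') = 0" by simp
  have exps': "finite {x. e' x \<noteq> 0} \<and> {x. e' x \<noteq> 0} \<subseteq> insert g B \<and> c e' \<in> F"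
    if "e' \<in> h ` (E \<times> {..N})" for e'
  proof -
    obtain e i where e: "e \<in> E" "e' = h (e, i)" using \<open>e' \<in> _\<close> by auto
    have sub: "{x. e' x \<noteq> 0} \<subseteq> insert g {x. e x \<noteq> 0}" using e unfolding h_def by auto
    then have "finite {x. e' x \<noteq> 0}" using exps e(1) by (meson finite_insert finite_subset)
    moreover have "{x. e' x \<noteq> 0} \<subseteq> insert g B" using sub exps e(1) by auto
    moreover have "c e' \<in> F" using e ch P unfolding poly_over_def by auto
    ultimately show ?thesis by blast
  qed
  have "coeff (P e0) i = 0" if "i \<le> N" for i
  proof -
    have "c (h (e0, i)) = 0"
      by (rule alg_indepD[OF ai _ _ s']) (use E exps' e0 that in auto)
    then show ?thesis using ch[OF e0] by simp
  qed
  moreover have "coeff (P e0) i = 0" if "\<not> i \<le> N" for i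
    using deg[OF e0] that by (simp add: coeff_eq_0)
  ultimately show "P e0 = 0" by (metis coeff_0 poly_eqI)
qed

lemma common_denominator:
  assumes F: "is_subfield F" and E: "finite E" and c: "\<forall>e\<in>E. c e \<in> gen_field (F \<union> {g})"
  obtains D P where "D \<noteq> 0" "\<forall>e\<in>E. poly_over F (P e) \<and> c e * D = poly (P e) g"
proof -
  have "\<forall>e\<in>E. \<exists>p q. poly_over F p \<and> poly_over F q \<and> poly q g \<noteq> 0 \<and> c e = poly p g / poly q g"
    using gen_field_insert_rational_values[OF F] c by metis
  then obtain P Q where PQ: "\<And>e. e \<in> E \<Longrightarrow> poly_over F (P e) \<and> poly_over F (Q e) \<and>
      poly (Q e) g \<noteq> 0 \<and> c e = poly (P e) g / poly (Q e) g"
    by metis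
  define D where "D = (\<Prod>e\<in>E. poly (Q e) g)"
  define P' where "P' e = P e * (\<Prod>e'\<in>E - {e}. Q e')" for e
  have "c e * D = poly (P' e) g" if "e \<in> E" for e
  proof -
    have "D = poly (Q e) g * (\<Prod>e'\<in>E - {e}. poly (Q e') g)"
      unfolding D_def using E that by (simp add: prod.remove)
    then show ?thesis using PQ[OF that] by (simp add: P'_def poly_prod)
  qed
  moreover have "poly_over F (P' e)" if "e \<in> E" for e
    unfolding P'_def using PQ that by (auto intro!: poly_over_mult poly_over_prod F)
  moreover have "D \<noteq> 0" unfolding D_def using E PQ by simp
  ultimately show ?thesis using that by blast
qed

lemma alg_indep_over_adjoined:
  assumes F: "is_subfield F" and g: "g \<notin> B" and ai: "alg_indep F (insert g B)"
  shows "alg_indep (gen_field (F \<union> {g})) B"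
proof (rule alg_indepI)
  fix E c e0
  assume E: "finite E"
    and cond: "\<forall>e\<in>E. finite {x. e x \<noteq> 0} \<and> {x. e x \<noteq> 0} \<subseteq> B \<and> c e \<in> gen_field (F \<union> {g})"
    and s: "(\<Sum>e\<in>E. c e * power_product e) = 0" and e0: "e0 \<in> E"
  have "\<forall>e\<in>E. c e \<in> gen_field (F \<union> {g})" using cond by blast
  then obtain D P where D: "D \<noteq> 0" and P: "\<forall>e\<in>E. poly_over F (P e) \<and> c e * D = poly (P e) g"
    by (rule common_denominator[OF F E])
  have "(\<Sum>e\<in>E. poly (P e) g * power_product e) = D * (\<Sum>e\<in>E. c e * power_product e)"
    unfolding sum_distrib_left using P by (intro sum.cong) (auto simp: ac_simps)
  then have "P e0 = 0"
    using s cond P by (intro alg_indep_insert_poly_coeffs[OF g ai E _ _ _ e0]) auto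
  then show "c e0 = 0" using P e0 D by auto
qed

lemma sum_power_product_by_degree:
  assumes "finite E" and "\<forall>e\<in>E. finite {x. e x \<noteq> 0} \<and> e b \<le> N"
  shows "(\<Sum>e\<in>E. c e * power_product e) =
    (\<Sum>i\<le>N. (\<Sum>e\<in>{e\<in>E. e b = i}. c e * power_product (e(b := 0))) * b ^ i)"
proof -
  have "power_product e = b ^ e b * power_product (e(b := 0))" if "e \<in> E" for e
  proof -
    have "finite {x. (e(b := 0)) x \<noteq> 0}"
      by (rule finite_subset[of _ "{x. e x \<noteq> 0}"]) (use assms(2) that in auto)
    then show ?thesis using power_product_fun_upd[of "e(b := 0)" b "e b"] by simp
  qed
  then have "(\<Sum>e\<in>{e\<in>E. e b = i}. c e * power_product e) =
      (\<Sum>e\<in>{e\<in>E. e b = i}. c e * power_product (e(b := 0))) * b ^ i" for i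
    unfolding sum_distrib_right by (intro sum.cong) auto
  moreover have "(\<Sum>e\<in>E. c e * power_product e) =
      (\<Sum>i\<le>N. \<Sum>e\<in>{e\<in>E. e b = i}. c e * power_product e)"
    by (rule sum.group[symmetric]) (use assms in auto)
  ultimately show ?thesis by simp
qed

lemma alg_indep_degree_slice:
  assumes ai: "alg_indep F B" and E: "finite E"
    and cond: "\<forall>e\<in>E. finite {x. e x \<noteq> 0} \<and> {x. e x \<noteq> 0} \<subseteq> insert b B \<and> c e \<in> F"
    and s: "(\<Sum>e\<in>{e\<in>E. e b = j}. c e * power_product (e(b := 0))) = 0"
    and e0: "e0 \<in> E" "e0 b = j"
  shows "c e0 = 0"
proof -
  define S where "S = {e\<in>E. e b = j}"
  have inj: "inj_on (\<lambda>e. e(b := 0)) S"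
    by (rule inj_on_fun_upd_const) (simp add: S_def)
  have "(\<Sum>e'\<in>(\<lambda>e. e(b := 0)) ` S. c (e'(b := j)) * power_product e') =
      (\<Sum>e\<in>S. c ((e(b := 0))(b := j)) * power_product (e(b := 0)))"
    by (rule sum.reindex[OF inj, unfolded comp_def])
  also have "\<dots> = (\<Sum>e\<in>{e\<in>E. e b = j}. c e * power_product (e(b := 0)))"
    unfolding S_def by (rule sum.cong) (auto simp: fun_upd_idem)
  also have "\<dots> = 0" by (rule s)
  finally have s': "(\<Sum>e'\<in>(\<lambda>e. e(b := 0)) ` S. c (e'(b := j)) * power_product e') = 0" .
  have "finite {x. e' x \<noteq> 0} \<and> {x. e' x \<noteq> 0} \<subseteq> B \<and> c (e'(b := j)) \<in> F"
    if e': "e' \<in> (\<lambda>e. e(b := 0)) ` S" for e'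
  proof -
    obtain e where e: "e \<in> S" "e' = e(b := 0)" using e' by auto
    have "finite {x. e' x \<noteq> 0}"
      by (rule finite_subset[of _ "{x. e x \<noteq> 0}"]) (use cond e in \<open>auto simp: S_def\<close>)
    moreover have "{x. e' x \<noteq> 0} \<subseteq> B" using cond e unfolding S_def by auto
    moreover have "c (e'(b := j)) \<in> F" using cond e unfolding S_def by (auto simp: fun_upd_idem)
    ultimately show ?thesis by blast
  qed
  then have "c ((e0(b := 0))(b := j)) = 0"
    by (intro alg_indepD[OF ai _ _ s']) (use E e0 in \<open>auto simp: S_def\<close>)
  then show "c e0 = 0" using e0(2) by (simp add: fun_upd_idem)
qed

text \<open>Grouping a vanishing relation by the exponent of b gives a polynomial in b over
  F(B); transcendence of b kills every coefficient, and each coefficient is itself a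
  relation among the elements of B.\<close>

lemma alg_indep_insert:
  assumes ai: "alg_indep F B" and F: "is_subfield F"
    and tr: "\<not> algebraic_over (gen_field (F \<union> B)) b"
  shows "alg_indep F (insert b B)"
proof (rule alg_indepI)
  fix E c e0
  assume E: "finite E"
    and cond: "\<forall>e\<in>E. finite {x. e x \<noteq> 0} \<and> {x. e x \<noteq> 0} \<subseteq> insert b B \<and> c e \<in> F"
    and s: "(\<Sum>e\<in>E. c e * power_product e) = 0" and e0: "e0 \<in> E"
  define G where "G = gen_field (F \<union> B)"
  have G: "is_subfield G" unfolding G_def by (rule gen_field_subfield)
  have FG: "F \<subseteq> G" and BG: "B \<subseteq> G" unfolding G_def using gen_field_incl by blast+
  define N where "N = Max ((\<lambda>e. e b) ` E)"
  define A where "A i = (\<Sum>e\<in>{e\<in>E. e b = i}. c e * power_product (e(b := 0)))" for i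
  have "(\<Sum>i\<le>N. A i * b ^ i) = 0"
    using sum_power_product_by_degree[of E b N c] s E cond unfolding A_def N_def by simp
  then have "poly (\<Sum>i\<le>N. monom (A i) i) b = 0" by (simp add: poly_sum poly_monom)
  moreover have "A i \<in> G" for i
    unfolding A_def using cond FG BG
    by (intro subfield_sum subfield_mult power_product_mem G) auto
  then have "coeff (\<Sum>i\<le>N. monom (A i) i) j \<in> G" for j
    by (simp add: coeff_sum coeff_monom subfield_0[OF G])
  ultimately have "(\<Sum>i\<le>N. monom (A i) i) = 0"
    using tr unfolding algebraic_over_def G_def by blast
  moreover have "coeff (\<Sum>i\<le>N. monom (A i) i) (e0 b) = A (e0 b)"
    unfolding N_def using E e0 by (simp add: coeff_sum coeff_monom)
  ultimately have "A (e0 b) = 0" by simp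
  then show "c e0 = 0"
    unfolding A_def by (rule alg_indep_degree_slice[OF ai E cond _ e0 refl])
qed

lemma not_algebraic_if_alg_indep_insert:
  assumes "finite B" "is_subfield F" "alg_indep F (insert b B)" "b \<notin> B"
  shows "\<not> algebraic_over (gen_field (F \<union> B)) b"
  using assms
proof (induct B arbitrary: F rule: finite_induct)
  case empty
  then show ?case by (simp add: not_algebraic_if_alg_indep_singleton gen_field_idem)
next
  case (insert g B')
  have "alg_indep F (insert g (insert b B'))" using insert(5) by (simp add: insert_commute)
  moreover have "g \<notin> insert b B'" using insert by auto
  ultimately have "alg_indep (gen_field (F \<union> {g})) (insert b B')"
    using alg_indep_over_adjoined[OF insert(4)] by blast
  then have "\<not> algebraic_over (gen_field (gen_field (F \<union> {g}) \<union> B')) b"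
    by (rule insert(3)[OF gen_field_subfield]) (use insert in auto)
  then show ?case unfolding gen_field_gen_field_Un by (simp add: Un_assoc)
qed

section \<open>Algebraic closure and transcendence bases\<close>

definition alg_cl :: "'a::field set \<Rightarrow> 'a set \<Rightarrow> 'a set" where
  "alg_cl F S = {x. algebraic_over (gen_field (F \<union> S)) x}"

lemma gen_field_subset_alg_cl: "gen_field (F \<union> S) \<subseteq> alg_cl F S"
  unfolding alg_cl_def using algebraic_over_mem[OF gen_field_subfield] by blast

lemma alg_cl_incl: "S \<subseteq> alg_cl F S" and alg_cl_incl_base: "F \<subseteq> alg_cl F S"
  using gen_field_subset_alg_cl gen_field_incl by blast+

lemma alg_cl_mono: "S \<subseteq> T \<Longrightarrow> alg_cl F S \<subseteq> alg_cl F T"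
  unfolding alg_cl_def using gen_field_mono[of "F \<union> S" "F \<union> T"] algebraic_over_mono by blast

lemma alg_cl_subfield: "is_subfield (alg_cl F S)"
  unfolding alg_cl_def by (rule subfield_algebraic_over[OF gen_field_subfield])

lemma alg_cl_subset:
  assumes "S \<subseteq> alg_cl F T"
  shows "alg_cl F S \<subseteq> alg_cl F T"
proof
  fix x assume "x \<in> alg_cl F S"
  moreover have "gen_field (F \<union> S) \<subseteq> alg_cl F T"
    by (rule gen_field_least[OF alg_cl_subfield]) (use assms alg_cl_incl_base in blast)
  ultimately show "x \<in> alg_cl F T"
    unfolding alg_cl_def by (blast intro: algebraic_over_trans[OF gen_field_subfield])
qed

lemma not_in_alg_cl_if_alg_indep:
  assumes "is_subfield F" "finite B" "alg_indep F B" "b \<in> B"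
  shows "b \<notin> alg_cl F (B - {b})"
  using not_algebraic_if_alg_indep_insert[of "B - {b}" F b] assms
  unfolding alg_cl_def by (simp add: insert_absorb)

lemma alg_indep_if_not_in_alg_cl:
  assumes "finite B" "is_subfield F" "\<forall>b\<in>B. b \<notin> alg_cl F (B - {b})"
  shows "alg_indep F B"
  using assms
proof (induct B rule: finite_induct)
  case empty
  show ?case by (rule alg_indep_empty)
next
  case (insert b B)
  have "b' \<notin> alg_cl F (B - {b'})" if "b' \<in> B" for b'
  proof -
    have "alg_cl F (B - {b'}) \<subseteq> alg_cl F (insert b B - {b'})" by (rule alg_cl_mono) blast
    then show ?thesis using insert(5) that by blast
  qed
  then have "alg_indep F B" using insert(3,4) by blast
  moreover have "\<not> algebraic_over (gen_field (F \<union> B)) b"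
    using insert(2,5) unfolding alg_cl_def by simp
  ultimately show ?case by (rule alg_indep_insert[OF _ insert(4)])
qed

lemma alg_cl_exchange:
  assumes F: "is_subfield F" and x: "x \<in> alg_cl F (insert y A)" and nx: "x \<notin> alg_cl F A"
  shows "y \<in> alg_cl F (insert x A)"
proof (rule ccontr)
  assume ny: "y \<notin> alg_cl F (insert x A)"
  have xy: "x \<noteq> y" using ny alg_cl_incl by blast
  define E where "E = gen_field (F \<union> A)"
  have E: "is_subfield E" unfolding E_def by (rule gen_field_subfield)
  have gE: "gen_field (E \<union> C) = gen_field (F \<union> (A \<union> C))" for C
    unfolding E_def gen_field_gen_field_Un by (simp add: Un_assoc)
  have "alg_indep E {x}"
    using alg_indep_insert[OF alg_indep_empty E, of x] nx gE[of "{}"] unfolding alg_cl_def by simp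
  then have "alg_indep E (insert y {x})"
    using alg_indep_insert[OF _ E, of "{x}" y] ny gE[of "{x}"] unfolding alg_cl_def by simp
  then have "\<not> algebraic_over (gen_field (E \<union> {y})) x"
    using not_algebraic_if_alg_indep_insert[OF _ E, of "{y}" x] xy by (simp add: insert_commute)
  then show False using x gE[of "{y}"] unfolding alg_cl_def by simp
qed

lemma alg_cl_replace:
  assumes F: "is_subfield F" and B: "B \<subseteq> alg_cl F S" and s: "s \<in> S"
    and b: "b \<in> B" "b \<notin> alg_cl F (S - {s})"
  shows "B \<subseteq> alg_cl F (insert b (S - {s}))"
proof -
  have "b \<in> alg_cl F (insert s (S - {s}))" using B b(1) s by (simp add: insert_absorb subsetD)
  then have "s \<in> alg_cl F (insert b (S - {s}))" using b(2) by (rule alg_cl_exchange[OF F])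
  then have "S \<subseteq> alg_cl F (insert b (S - {s}))"
    using alg_cl_incl[of "insert b (S - {s})" F] by blast
  then have "alg_cl F S \<subseteq> alg_cl F (insert b (S - {s}))" by (rule alg_cl_subset)
  with B show ?thesis by (rule order_trans)
qed

lemma subset_if_alg_indep_subset_alg_cl:
  assumes "is_subfield F" "finite B" "alg_indep F B" "B \<subseteq> alg_cl F S" "S \<subseteq> B"
  shows "B \<subseteq> S"
proof
  fix b assume b: "b \<in> B"
  show "b \<in> S"
  proof (rule ccontr)
    assume "b \<notin> S"
    then have "S \<subseteq> B - {b}" using assms(5) by blast
    then have "alg_cl F S \<subseteq> alg_cl F (B - {b})" by (rule alg_cl_mono)
    then have "b \<in> alg_cl F (B - {b})" using assms(4) b by blast
    then show False using not_in_alg_cl_if_alg_indep[OF assms(1-3) b] by blast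
  qed
qed

lemma card_le_if_alg_indep_subset_alg_cl:
  assumes "is_subfield F" "finite S" "finite B" "alg_indep F B" "B \<subseteq> alg_cl F S"
  shows "card B \<le> card S"
  using assms(2-)
proof (induct "card (S - B)" arbitrary: S rule: less_induct)
  case less
  show ?case
  proof (cases "S - B = {}")
    case True
    then have "B \<subseteq> S" by (intro subset_if_alg_indep_subset_alg_cl[OF assms(1) less(3-5)]) blast
    then show ?thesis using less(2) by (simp add: card_mono)
  next
    case False
    then obtain s where s: "s \<in> S" "s \<notin> B" by auto
    have "(S - {s}) - B = (S - B) - {s}" by blast
    moreover have "card ((S - B) - {s}) < card (S - B)"
      using s less(2) by (intro card_Diff1_less) auto
    ultimately have lt: "card ((S - {s}) - B) < card (S - B)" by simp
    have fin: "finite (S - {s})" using less(2) by simp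
    show ?thesis
    proof (cases "B \<subseteq> alg_cl F (S - {s})")
      case True
      have "card B \<le> card (S - {s})" by (rule less(1)[OF lt fin less(3,4) True])
      then show ?thesis using less(2) card_Diff1_le[of S s] by linarith
    next
      case False
      then obtain b where b: "b \<in> B" "b \<notin> alg_cl F (S - {s})" by auto
      define S' where "S' = insert b (S - {s})"
      have "S - {s} \<subseteq> alg_cl F (S - {s})" by (rule alg_cl_incl)
      then have "b \<notin> S - {s}" using b(2) by blast
      then have "card S' = card S" unfolding S'_def
        using card_insert_disjoint[OF fin] card_Suc_Diff1[OF less(2) s(1)] by simp
      moreover have "card B \<le> card S'"
      proof (rule less(1))
        have "S' - B = (S - {s}) - B" unfolding S'_def using b(1) by blast
        then show "card (S' - B) < card (S - B)" using lt by simp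
        show "finite S'" unfolding S'_def using fin by simp
        show "B \<subseteq> alg_cl F S'"
          unfolding S'_def using alg_cl_replace[OF assms(1) less(5) s(1) b] .
      qed (use less(3,4) in auto)
      ultimately show ?thesis by simp
    qed
  qed
qed

text \<open>A dependence among the elements of U would let a proper subset of U span a
  transcendence basis of L, contradicting the exchange lemma.\<close>

lemma alg_indep_if_card_le_trdeg:
  assumes F: "is_subfield F" and tr: "has_trdeg F L n"
    and U: "finite U" "card U \<le> n" "L \<subseteq> alg_cl F U"
  shows "alg_indep F U"
proof -
  obtain B where B: "B \<subseteq> L" "finite B" "card B = n" "alg_indep F B"
    using tr unfolding has_trdeg_def by blast
  have "u \<notin> alg_cl F (U - {u})" if u: "u \<in> U" for u
  proof
    assume "u \<in> alg_cl F (U - {u})"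
    then have "U \<subseteq> alg_cl F (U - {u})" using alg_cl_incl[of "U - {u}" F] by blast
    then have "B \<subseteq> alg_cl F (U - {u})" using alg_cl_subset[of U F "U - {u}"] B(1) U(3) by blast
    then have "card B \<le> card (U - {u})"
      using card_le_if_alg_indep_subset_alg_cl[OF F _ B(2,4)] U(1) by simp
    then show False using card_Diff1_less[OF U(1) u] B(3) U(2) by simp
  qed
  then show ?thesis by (intro alg_indep_if_not_in_alg_cl U(1) F) blast
qed

section \<open>Specialising points of a conic\<close>

text \<open>A point over F(b), b transcendental, is a pair of rational functions in b; clearing
  denominators gives a polynomial identity, which may be evaluated at any element of the
  infinite field k0 that is not a root of the denominators.\<close>

lemma conic_point_specialise:
  assumes F: "is_subfield F" and k0: "k0 \<subseteq> F" "infinite k0"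
    and tr: "\<not> algebraic_over F b"
    and x: "x \<in> gen_field (F \<union> {b})" and y: "y \<in> gen_field (F \<union> {b})"
    and \<alpha>: "\<alpha> \<in> F" and \<gamma>: "\<gamma> \<in> F" and eq: "x^2 - \<alpha> * y^2 = \<gamma>"
  shows "\<exists>x'\<in>F. \<exists>y'\<in>F. x'^2 - \<alpha> * y'^2 = \<gamma>"
proof -
  obtain p1 q1 where 1: "poly_over F p1" "poly_over F q1" "poly q1 b \<noteq> 0"
      "x = poly p1 b / poly q1 b"
    using gen_field_insert_rational_values[OF F x] by blast
  obtain p2 q2 where 2: "poly_over F p2" "poly_over F q2" "poly q2 b \<noteq> 0"
      "y = poly p2 b / poly q2 b"
    using gen_field_insert_rational_values[OF F y] by blast
  define H where "H = (p1 * q2)^2 - [:\<alpha>:] * (p2 * q1)^2 - [:\<gamma>:] * (q1 * q2)^2"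
  have "poly_over F H" unfolding H_def
    by (intro poly_over_diff poly_over_mult poly_over_power poly_over_const F \<alpha> \<gamma> 1 2)
  moreover have "poly H b = (poly q1 b * poly q2 b)^2 * (x^2 - \<alpha> * y^2 - \<gamma>)"
    unfolding H_def 1(4) 2(4) using 1(3) 2(3) by (simp add: field_simps power2_eq_square)
  ultimately have H0: "H = 0" using tr eq unfolding algebraic_over_def poly_over_def by auto
  have "q1 * q2 \<noteq> 0" using 1(3) 2(3) by auto
  then have "\<not> k0 \<subseteq> {c. poly (q1 * q2) c = 0}"
    using poly_roots_finite k0(2) finite_subset by blast
  then obtain c where c: "c \<in> k0" "poly q1 c \<noteq> 0" "poly q2 c \<noteq> 0" by auto
  have "poly H c = 0" using H0 by simp
  then have "(poly p1 c / poly q1 c)^2 - \<alpha> * (poly p2 c / poly q2 c)^2 = \<gamma>"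
    using c(2,3) unfolding H_def by (simp add: field_simps power2_eq_square)
  moreover have "poly p1 c / poly q1 c \<in> F" "poly p2 c / poly q2 c \<in> F"
    using poly_over_poly_mem[OF F] 1 2 c(1) k0(1) by (auto intro!: subfield_divide F)
  ultimately show ?thesis by blast
qed

lemma conic_point_if_purely_transcendental:
  assumes "finite B" "is_subfield k0" "infinite k0" "alg_indep k0 B"
    and "x \<in> gen_field (k0 \<union> B)" "y \<in> gen_field (k0 \<union> B)" "\<alpha> \<in> k0" "\<gamma> \<in> k0"
    and "x^2 - \<alpha> * y^2 = \<gamma>"
  shows "\<exists>x'\<in>k0. \<exists>y'\<in>k0. x'^2 - \<alpha> * y'^2 = \<gamma>"
  using assms
proof (induct B arbitrary: x y rule: finite_induct)
  case empty
  then show ?case using gen_field_idem by auto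
next
  case (insert b B)
  define F where "F = gen_field (k0 \<union> B)"
  have F: "is_subfield F" unfolding F_def by (rule gen_field_subfield)
  have k0F: "k0 \<subseteq> F" unfolding F_def using gen_field_incl by blast
  have tr: "\<not> algebraic_over F b"
    unfolding F_def using not_algebraic_if_alg_indep_insert[OF insert(1,4,6,2)] .
  have "gen_field (k0 \<union> insert b B) = gen_field (F \<union> {b})"
    unfolding F_def gen_field_gen_field_Un by (simp add: Un_assoc insert_commute)
  then obtain x' y' where xy: "x' \<in> F" "y' \<in> F" "x'^2 - \<alpha> * y'^2 = \<gamma>"
    using conic_point_specialise[OF F k0F insert(5) tr _ _ _ _ insert(11)] insert(7-10) k0F
    by auto
  have "alg_indep k0 B" using insert(6) alg_indep_mono by blast
  from insert(3)[OF insert(4,5) this _ _ insert(9,10) xy(3)] xy(1,2) show ?case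
    unfolding F_def by blast
qed

section \<open>Conics and quaternion algebras\<close>

lemma conic_point_if_quat_class_zero:
  assumes k: "is_subfield k" and a: "a \<in> k" "\<not> (\<exists>c\<in>k. a = c^2)"
    and q: "quat_class_zero k a b"
  shows "\<exists>p\<in>k. \<exists>q\<in>k. p^2 - a * q^2 = b"
proof -
  obtain x y where xy: "x \<in> k" "y \<in> k" "a * x^2 + b * y^2 = 1"
    using q unfolding quat_class_zero_def by blast
  have "y \<noteq> 0"
  proof
    assume "y = 0"
    then have ax: "a * x^2 = 1" using xy(3) by simp
    then have "x \<noteq> 0" by auto
    then have "a = (inverse x)^2" using ax by (simp add: field_simps power2_eq_square)
    then show False using a(2) subfield_inverse[OF k xy(1)] by blast
  qed
  then have "(inverse y)^2 - a * (x / y)^2 = b"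
    using xy(3) by (simp add: field_simps power2_eq_square)
  moreover have "inverse y \<in> k" "x / y \<in> k" using xy subfield_inverse subfield_divide k by auto
  ultimately show ?thesis by blast
qed

text \<open>If b = -a q^2 the conic has the point p = 0, but (a, b) still splits: with
  x = (1 + 1/a)/2 and y = (1/a - 1)/(2q) one has a x^2 + b y^2 = 1 (here char k \<noteq> 2).\<close>

lemma quat_class_zero_if_conic_point:
  fixes k :: "'a::field set"
  assumes k: "is_subfield k" and two: "(2::'a::field) \<noteq> 0" and a0: "a \<noteq> 0" and ak: "a \<in> k"
    and b0: "b \<noteq> 0" and pq: "p \<in> k" "q \<in> k" and e: "p^2 - a * q^2 = b"
  shows "quat_class_zero k a b"
  unfolding quat_class_zero_def
proof (cases "p = 0")
  case False
  have "a * (q / p)^2 + b * (inverse p)^2 = (a * q^2 + b) / p^2"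
    using False by (simp add: field_simps power2_eq_square)
  also have "a * q^2 + b = p^2" using e by (simp add: algebra_simps)
  finally have "a * (q / p)^2 + b * (inverse p)^2 = 1" using False by simp
  moreover have "q / p \<in> k" "inverse p \<in> k" using pq subfield_inverse subfield_divide k by auto
  ultimately show "\<exists>x\<in>k. \<exists>y\<in>k. a * x^2 + b * y^2 = 1" by blast
next
  case True
  then have bq: "b = - a * q^2" using e by simp
  then have q0: "q \<noteq> 0" using b0 by auto
  define x where "x = (1 + inverse a) / 2"
  define y where "y = (inverse a - 1) / (2 * q)"
  have "(4::'a) \<noteq> 0" "(16::'a) \<noteq> 0"
    using two by (metis mult_2_right mult_eq_0_iff numeral_Bit0)+
  then have "a * x^2 + b * y^2 = 1"
    unfolding x_def y_def bq using two q0 a0 by (simp add: field_simps power2_eq_square)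
  moreover have "x \<in> k" "y \<in> k" unfolding x_def y_def
    by (intro subfield_divide subfield_add subfield_diff subfield_mult subfield_inverse
        subfield_1 subfield_numeral k ak pq)+
  ultimately show "\<exists>x\<in>k. \<exists>y\<in>k. a * x^2 + b * y^2 = 1" by blast
qed

text \<open>Projection from a point (p, q) of the conic: the line of slope u through it meets
  the conic again in (s, t), and (s, t) is recovered rationally from u.\<close>

lemma conic_slope_parametrisation:
  fixes a b s t p q :: "'a::field"
  assumes two: "2 \<noteq> (0::'a)" and sp: "s \<noteq> p" and e1: "s^2 - a * t^2 = b"
    and e2: "p^2 - a * q^2 = b" and b0: "b \<noteq> 0"
  defines "u \<equiv> (t - q) / (s - p)"
  shows "1 - a * u^2 \<noteq> 0" "s = (2 * a * q * u - p - a * p * u^2) / (1 - a * u^2)"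
    "t = q + u * (s - p)"
proof -
  have tq: "t - q = u * (s - p)" unfolding u_def using sp by simp
  show t: "t = q + u * (s - p)" using tq by (simp add: algebra_simps)
  have "(s - p) * (s + p) = a * (t - q) * (t + q)"
    using e1 e2 by (simp add: algebra_simps power2_eq_square)
  also have "\<dots> = (s - p) * (a * u * (t + q))" unfolding tq by (simp add: algebra_simps)
  finally have "s + p = a * u * (t + q)" using sp by simp
  then have key: "s * (1 - a * u^2) = 2 * a * q * u - p - a * p * u^2"
    unfolding t by (simp add: algebra_simps power2_eq_square)
  show nz: "1 - a * u^2 \<noteq> 0"
  proof
    assume h: "1 - a * u^2 = 0"
    have "a * p * u^2 = p * (a * u^2)" by (simp add: algebra_simps)
    then have apu: "a * p * u^2 = p" using h by simp
    have "2 * (a * q * u - p) = 2 * a * q * u - p - a * p * u^2"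
      unfolding apu by (simp add: algebra_simps)
    also have "\<dots> = 0" using key h by simp
    finally have "a * q * u - p = 0" using two by simp
    then have "p = a * q * u" by simp
    then have "q = p * u" using h by (simp add: algebra_simps power2_eq_square)
    then have "b = p^2 - a * (p * u)^2" using e2 by simp
    also have "\<dots> = p^2 * (1 - a * u^2)" by (simp add: algebra_simps power2_eq_square)
    finally have "b = p^2 * (1 - a * u^2)" .
    then show False using h b0 by simp
  qed
  show "s = (2 * a * q * u - p - a * p * u^2) / (1 - a * u^2)"
    using key nz by (simp add: field_simps)
qed

lemma conic_point_in_gen_field_slope:
  fixes F :: "'a::field set"
  assumes F: "is_subfield F" and two: "2 \<noteq> (0::'a)" and "a \<in> F" "p \<in> F" "q \<in> F"
    and "s \<noteq> p" and "s^2 - a * t^2 = b" and "p^2 - a * q^2 = b" and "b \<noteq> 0"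
  shows "{s, t} \<subseteq> gen_field (F \<union> {(t - q) / (s - p)})"
proof -
  define u where "u = (t - q) / (s - p)"
  define G where "G = gen_field (F \<union> {u})"
  have G: "is_subfield G" unfolding G_def by (rule gen_field_subfield)
  have FG: "F \<subseteq> G" and uG: "u \<in> G" using gen_field_incl[of "F \<union> {u}"] unfolding G_def by auto
  note par = conic_slope_parametrisation[OF two assms(6-9), folded u_def]
  have "s \<in> G" unfolding par(2)
    using FG uG assms(3-5)
    by (intro subfield_divide subfield_diff subfield_mult subfield_power subfield_numeral
        subfield_1 G) auto
  moreover have "t \<in> G" unfolding par(3)
    using FG uG assms(4,5) \<open>s \<in> G\<close> by (intro subfield_add subfield_mult subfield_diff G) auto
  ultimately show ?thesis unfolding G_def u_def by blast
qed

lemma bconst_add: "bconst (x + y) = bconst x + bconst (y::'a::field)"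
  unfolding bconst_def by (simp add: single_add)

lemma bconst_mult: "bconst (x * y) = bconst x * bconst (y::'a::field)"
  unfolding bconst_def by (simp add: mult_single)

lemma bconst_0: "bconst (0::'a::field) = 0"
  unfolding bconst_def by (simp add: Zero_fract_def)

lemma bconst_1: "bconst (1::'a::field) = 1"
  unfolding bconst_def by (simp add: One_fract_def)

lemma bconst_inj: "inj (bconst :: 'a::field \<Rightarrow> 'a bigfield)"
proof (rule injI)
  fix x y :: 'a assume "bconst x = bconst y"
  then have "Poly_Mapping.single (0::nat \<Rightarrow>\<^sub>0 nat) x = Poly_Mapping.single 0 y"
    unfolding bconst_def by (simp add: eq_fract)
  then show "x = y" using inj_single[of 0] by (simp add: inj_eq)
qed

lemma bconst_eq_iff: "bconst x = bconst y \<longleftrightarrow> x = (y::'a::field)"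
  by (metis bconst_inj injD)

lemma bconst_uminus: "bconst (- x) = - bconst (x::'a::field)"
proof -
  have "bconst x + bconst (- x) = 0" using bconst_add[of x "- x"] by (simp add: bconst_0)
  from add.inverse_unique[OF this] show ?thesis by simp
qed

lemma bconst_diff: "bconst (x - y) = bconst x - bconst (y::'a::field)"
  using bconst_add[of x "- y"] bconst_uminus[of y] by simp

lemma bconst_inverse: "bconst (inverse x) = inverse (bconst (x::'a::field))"
proof (cases "x = 0")
  case True then show ?thesis by (simp add: bconst_0)
next
  case False
  then have "bconst (inverse x) * bconst x = 1" unfolding bconst_mult[symmetric] by (simp add: bconst_1)
  then show ?thesis by (metis inverse_unique mult.commute)
qed

lemma bconst_power: "bconst (x ^ n) = bconst (x::'a::field) ^ n"
  by (induct n) (simp_all add: bconst_1 bconst_mult)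

lemma bconst_sum: "bconst (sum f A) = (\<Sum>x\<in>A. bconst (f x :: 'a::field))"
  by (induct A rule: infinite_finite_induct) (simp_all add: bconst_0 bconst_add)

lemma bconst_prod: "bconst (prod f A) = (\<Prod>x\<in>A. bconst (f x :: 'a::field))"
  by (induct A rule: infinite_finite_induct) (simp_all add: bconst_1 bconst_mult)

lemma subfield_image_bconst: "is_subfield F \<Longrightarrow> is_subfield (bconst ` (F::'a::field set))"
  unfolding is_subfield_def
  by (auto simp: bconst_0[symmetric] bconst_1[symmetric] bconst_add[symmetric]
      bconst_diff[symmetric] bconst_mult[symmetric] bconst_inverse[symmetric])

lemma image_bconst_gen_field: "bconst ` gen_field S = gen_field (bconst ` (S::'a::field set))"
proof
  show "gen_field (bconst ` S) \<subseteq> bconst ` gen_field S"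
    by (intro gen_field_least subfield_image_bconst gen_field_subfield image_mono gen_field_incl)
  define T where "T = {x. bconst x \<in> gen_field (bconst ` S)}"
  have G: "is_subfield (gen_field (bconst ` S))" by (rule gen_field_subfield)
  have "is_subfield T" unfolding is_subfield_def
  proof (intro conjI ballI)
    show "0 \<in> T" unfolding T_def using subfield_0[OF G] by (simp add: bconst_0)
    show "1 \<in> T" unfolding T_def using subfield_1[OF G] by (simp add: bconst_1)
  next
    fix x y assume xy: "x \<in> T" "y \<in> T"
    then have xy': "bconst x \<in> gen_field (bconst ` S)" "bconst y \<in> gen_field (bconst ` S)"
      unfolding T_def by auto
    show "x + y \<in> T" unfolding T_def using subfield_add[OF G xy'] by (simp add: bconst_add)
    show "x - y \<in> T" unfolding T_def using subfield_diff[OF G xy'] by (simp add: bconst_diff)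
    show "x * y \<in> T" unfolding T_def using subfield_mult[OF G xy'] by (simp add: bconst_mult)
  next
    fix x assume "x \<in> T"
    then have x': "bconst x \<in> gen_field (bconst ` S)" unfolding T_def by auto
    show "inverse x \<in> T" unfolding T_def using subfield_inverse[OF G x'] by (simp add: bconst_inverse)
  qed
  moreover have "S \<subseteq> T"
  proof
    fix x assume "x \<in> S"
    then have "bconst x \<in> bconst ` S" by simp
    then show "x \<in> T" unfolding T_def using gen_field_incl[of "bconst ` S"] by blast
  qed
  ultimately have "gen_field S \<subseteq> T" by (rule gen_field_least)
  then show "bconst ` gen_field S \<subseteq> gen_field (bconst ` S)" unfolding T_def by blast
qed

lemma bconst_power_product:
  assumes fin: "finite {x. e x \<noteq> 0}" and sub: "{x. e x \<noteq> 0} \<subseteq> bconst ` B"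
  shows "power_product e = bconst (power_product (e \<circ> bconst))" "finite {y. (e \<circ> bconst) y \<noteq> 0}"
    "{y. (e \<circ> bconst) y \<noteq> 0} \<subseteq> (B::'a::field set)"
proof -
  have im: "bconst ` {y. (e \<circ> bconst) y \<noteq> 0} = {x. e x \<noteq> 0}" using sub by auto
  have inj: "inj_on bconst {y. (e \<circ> bconst) y \<noteq> 0}" by (rule inj_on_subset[OF bconst_inj]) simp
  show "finite {y. (e \<circ> bconst) y \<noteq> 0}"
    using im fin inj by (metis finite_image_iff)
  show "{y. (e \<circ> bconst) y \<noteq> 0} \<subseteq> B"
  proof
    fix y assume "y \<in> {y. (e \<circ> bconst) y \<noteq> 0}"
    then have "bconst y \<in> bconst ` B" using sub by auto
    then show "y \<in> B" by (simp add: inj_image_mem_iff[OF bconst_inj])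
  qed
  have "power_product e = (\<Prod>x\<in>bconst ` {y. (e \<circ> bconst) y \<noteq> 0}. x ^ e x)" unfolding power_product_def im ..
  also have "\<dots> = (\<Prod>y\<in>{y. (e \<circ> bconst) y \<noteq> 0}. bconst y ^ e (bconst y))"
    using prod.reindex[OF inj, of "\<lambda>x. x ^ e x"] unfolding comp_def by simp
  also have "\<dots> = bconst (power_product (e \<circ> bconst))"
    unfolding power_product_def bconst_prod bconst_power by simp
  finally show "power_product e = bconst (power_product (e \<circ> bconst))" .
qed

lemma inj_on_comp_if_support_subset_image:
  assumes "\<forall>e\<in>E. {x. e x \<noteq> 0} \<subseteq> h ` B"
  shows "inj_on (\<lambda>e. e \<circ> h) E"
proof (rule inj_onI)
  fix e e' assume e: "e \<in> E" "e' \<in> E" and eq: "e \<circ> h = e' \<circ> h"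
  show "e = e'"
  proof
    fix x show "e x = e' x"
    proof (cases "x \<in> h ` B")
      case True
      then show ?thesis using eq by (metis comp_apply imageE)
    next
      case False
      have "{x. e x \<noteq> 0} \<subseteq> h ` B" "{x. e' x \<noteq> 0} \<subseteq> h ` B" using assms e by auto
      then have "e x = 0" "e' x = 0" using False by auto
      then show ?thesis by simp
    qed
  qed
qed

lemma alg_indep_image_bconst:
  assumes ai: "alg_indep F (B::'a::field set)"
  shows "alg_indep (bconst ` F) (bconst ` B)"
proof (rule alg_indepI)
  fix E c e0
  assume E: "finite E" and cond: "\<forall>e\<in>E. finite {x. e x \<noteq> 0} \<and> {x. e x \<noteq> 0} \<subseteq> bconst ` B \<and> c e \<in> bconst ` F"
    and s0: "(\<Sum>e\<in>E. c e * power_product e) = 0" and e0: "e0 \<in> E"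
  define r where "r e = e \<circ> bconst" for e :: "'a bigfield \<Rightarrow> nat"
  have inj: "inj_on r E"
    unfolding r_def using cond by (intro inj_on_comp_if_support_subset_image) blast
  have "\<forall>e\<in>E. \<exists>d\<in>F. c e = bconst d" using cond by blast
  then obtain d where d: "\<And>e. e \<in> E \<Longrightarrow> d e \<in> F \<and> c e = bconst (d e)" by metis
  define c' where "c' e = d (the_inv_into E r e)" for e
  have c'r: "c' (r e) = d e" if "e \<in> E" for e
    unfolding c'_def using the_inv_into_f_f[OF inj that] by simp
  have mr: "power_product e = bconst (power_product (r e))" if "e \<in> E" for e
    unfolding r_def using bconst_power_product(1) cond that by blast
  have "bconst (\<Sum>e'\<in>r ` E. c' e' * power_product e') = bconst (\<Sum>e\<in>E. d e * power_product (r e))"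
    by (simp add: sum.reindex[OF inj] c'r)
  also have "\<dots> = (\<Sum>e\<in>E. c e * power_product e)"
    unfolding bconst_sum bconst_mult using d mr by simp
  also have "\<dots> = bconst 0" using s0 bconst_0 by simp
  finally have s1: "(\<Sum>e'\<in>r ` E. c' e' * power_product e') = 0" by (simp add: bconst_eq_iff)
  have "c' (r e0) = 0"
  proof (rule alg_indepD[OF ai _ _ s1])
    show "finite (r ` E)" using E by simp
    show "r e0 \<in> r ` E" using e0 by simp
    show "\<forall>e'\<in>r ` E. finite {x. e' x \<noteq> 0} \<and> {x. e' x \<noteq> 0} \<subseteq> B \<and> c' e' \<in> F"
      using cond bconst_power_product(2,3) d c'r unfolding r_def by fastforce
  qed
  then show "c e0 = 0" using c'r[OF e0] d[OF e0] bconst_0 by simp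
qed

lemma alg_indep_conic_first_coordinates:
  fixes k :: "'K::field set" and s t b :: "nat \<Rightarrow> 'K"
  assumes k: "is_subfield k" and a: "a \<in> k" "a \<noteq> 0"
    and b: "\<forall>i\<in>I. b i \<in> k" and eq: "\<forall>i\<in>I. (s i)^2 - a * (t i)^2 = b i"
    and I: "finite I" "card I = n"
    and tr: "has_trdeg k (gen_field (k \<union> s ` I \<union> t ` I)) n"
  shows "alg_indep k (s ` I)"
proof -
  have t_alg: "t i \<in> alg_cl k (s ` I)" if i: "i \<in> I" for i
  proof -
    define G where "G = gen_field (k \<union> s ` I)"
    have G: "is_subfield G" unfolding G_def by (rule gen_field_subfield)
    have "k \<subseteq> G" "s i \<in> G" using gen_field_incl[of "k \<union> s ` I"] i unfolding G_def by auto
    then have "((s i)^2 - b i) / a \<in> G"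
      using a(1) b i by (intro subfield_divide subfield_diff subfield_power G) auto
    moreover have "(t i)^2 = ((s i)^2 - b i) / a" using eq i a(2) by (auto simp: field_simps)
    ultimately have "algebraic_over G (t i)"
      by (intro algebraic_over_root[OF G, of "((s i)^2 - b i) / a" _ 2]) auto
    then show ?thesis unfolding alg_cl_def G_def by simp
  qed
  have "k \<union> s ` I \<union> t ` I \<subseteq> alg_cl k (s ` I)"
    using alg_cl_incl[of "s ` I" k] alg_cl_incl_base[of k "s ` I"] t_alg by auto
  then have "gen_field (k \<union> s ` I \<union> t ` I) \<subseteq> alg_cl k (s ` I)"
    by (rule gen_field_least[OF alg_cl_subfield])
  then show ?thesis
    using alg_indep_if_card_le_trdeg[OF k tr] I card_image_le[OF I(1), of s] by simp
qed

lemma gen_field_conic_points_eq_slopes: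
  fixes k :: "'K::field set" and s t p q b :: "nat \<Rightarrow> 'K"
  assumes k: "is_subfield k" and two: "(2::'K) \<noteq> 0" and a: "a \<in> k"
    and pq: "\<forall>i\<in>I. p i \<in> k \<and> q i \<in> k \<and> (p i)^2 - a * (q i)^2 = b i"
    and eq: "\<forall>i\<in>I. (s i)^2 - a * (t i)^2 = b i" and b: "\<forall>i\<in>I. b i \<noteq> 0"
    and sp: "\<forall>i\<in>I. s i \<noteq> p i"
  shows "gen_field (k \<union> (s ` I \<union> t ` I)) =
    gen_field (k \<union> (\<lambda>i. (t i - q i) / (s i - p i)) ` I)"
proof (rule gen_field_Un_eqI)
  show "s ` I \<union> t ` I \<subseteq> gen_field (k \<union> (\<lambda>i. (t i - q i) / (s i - p i)) ` I)"
  proof -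
    have "{s i, t i} \<subseteq> gen_field (k \<union> (\<lambda>i. (t i - q i) / (s i - p i)) ` I)" if i: "i \<in> I" for i
    proof -
      have "{s i, t i} \<subseteq> gen_field (k \<union> {(t i - q i) / (s i - p i)})"
        using pq i sp eq b a by (intro conic_point_in_gen_field_slope[OF k two]) auto
      also have "\<dots> \<subseteq> gen_field (k \<union> (\<lambda>i. (t i - q i) / (s i - p i)) ` I)"
        using i by (intro gen_field_mono) auto
      finally show ?thesis .
    qed
    then show ?thesis by auto
  qed
  show "(\<lambda>i. (t i - q i) / (s i - p i)) ` I \<subseteq> gen_field (k \<union> (s ` I \<union> t ` I))"
  proof
    fix x assume "x \<in> (\<lambda>i. (t i - q i) / (s i - p i)) ` I"
    then obtain i where i: "i \<in> I" "x = (t i - q i) / (s i - p i)" by blast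
    have "s i \<in> gen_field (k \<union> (s ` I \<union> t ` I))" "t i \<in> gen_field (k \<union> (s ` I \<union> t ` I))"
      "p i \<in> gen_field (k \<union> (s ` I \<union> t ` I))" "q i \<in> gen_field (k \<union> (s ` I \<union> t ` I))"
      using gen_field_incl[of "k \<union> (s ` I \<union> t ` I)"] pq i by auto
    then show "x \<in> gen_field (k \<union> (s ` I \<union> t ` I))"
      unfolding i(2) by (intro subfield_divide subfield_diff gen_field_subfield)
  qed
qed

lemma k_rational_if_quat_class_zero:
  fixes k :: "'K::field set" and s t b :: "nat \<Rightarrow> 'K"
  assumes k: "is_subfield k" and two: "(2::'K) \<noteq> 0"
    and a: "a \<in> k" "\<not> (\<exists>c\<in>k. a = c^2)"
    and b: "\<forall>i\<in>I. b i \<in> k \<and> b i \<noteq> 0" and eq: "\<forall>i\<in>I. (s i)^2 - a * (t i)^2 = b i"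
    and I: "finite I" "card I = n"
    and tr: "has_trdeg k (gen_field (k \<union> s ` I \<union> t ` I)) n"
    and Q: "\<forall>i\<in>I. quat_class_zero k a (b i)"
  shows "k_rational k (gen_field (k \<union> s ` I \<union> t ` I))"
proof -
  have "a \<noteq> 0" using a(2) subfield_0[OF k] by force
  then have indep: "alg_indep k (s ` I)"
    using alg_indep_conic_first_coordinates[OF k a(1) _ _ eq I tr] b by blast
  have s_notin: "s i \<notin> k" if "i \<in> I" for i
  proof -
    have "alg_indep k {s i}" by (rule alg_indep_mono[OF indep]) (use that in auto)
    then have "\<not> algebraic_over k (s i)" by (rule not_algebraic_if_alg_indep_singleton)
    then show ?thesis using algebraic_over_mem[OF k] by blast
  qed
  have "\<forall>i\<in>I. \<exists>p\<in>k. \<exists>q\<in>k. p^2 - a * q^2 = b i"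
    using conic_point_if_quat_class_zero[OF k a] Q by blast
  then obtain p q where pq: "\<forall>i\<in>I. p i \<in> k \<and> q i \<in> k \<and> (p i)^2 - a * (q i)^2 = b i"
    by metis
  define u where "u i = (t i - q i) / (s i - p i)" for i
  have "\<forall>i\<in>I. s i \<noteq> p i" using s_notin pq by metis
  then have L: "gen_field (k \<union> s ` I \<union> t ` I) = gen_field (k \<union> u ` I)"
    using gen_field_conic_points_eq_slopes[OF k two a(1) pq eq] b unfolding u_def
    by (simp add: Un_assoc)
  then have "alg_indep k (u ` I)"
    using alg_indep_if_card_le_trdeg[OF k tr] I card_image_le[OF I(1), of u]
      gen_field_subset_alg_cl[of k "u ` I"] by simp
  then show ?thesis unfolding k_rational_def using L I(1) by blast
qed

lemma stably_k_rational_if_k_rational: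
  assumes "k_rational k (L::'K::field set)"
  shows "stably_k_rational k L"
proof -
  obtain U where U: "finite U" "alg_indep k U" "L = gen_field (k \<union> U)"
    using assms unfolding k_rational_def by blast
  have "gen_field (bconst ` L \<union> {}) = gen_field (bconst ` k \<union> bconst ` U)"
    unfolding U(3) image_bconst_gen_field image_Un by (simp add: gen_field_idem gen_field_subfield)
  then have "k_rational (bconst ` k) (gen_field (bconst ` L \<union> {}))"
    unfolding k_rational_def using U(1) alg_indep_image_bconst[OF U(2)] by blast
  then show ?thesis unfolding stably_k_rational_def using alg_indep_empty by blast
qed

lemma k_unirational_if_stably_k_rational:
  assumes "stably_k_rational k (L::'K::field set)"
  shows "k_unirational k L"
proof -
  obtain Y where "k_rational (bconst ` k) (gen_field (bconst ` L \<union> Y))"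
    using assms unfolding stably_k_rational_def by blast
  moreover have "inj_on bconst L" by (rule inj_on_subset[OF bconst_inj]) simp
  moreover have "bconst ` L \<subseteq> gen_field (bconst ` L \<union> Y)"
    using gen_field_incl[of "bconst ` L \<union> Y"] by simp
  ultimately show ?thesis unfolding k_unirational_def
    by (intro exI[of _ "gen_field (bconst ` L \<union> Y)"] exI[of _ bconst])
       (auto simp: bconst_add bconst_mult)
qed

lemma additive_multiplicative_conic:
  fixes f :: "'a::field \<Rightarrow> 'b::field"
  assumes L: "is_subfield L" and f: "\<forall>x\<in>L. \<forall>y\<in>L. f (x + y) = f x + f y \<and> f (x * y) = f x * f y"
    and x: "x \<in> L" and y: "y \<in> L" and a: "a \<in> L"
  shows "f (x^2 - a * y^2) = (f x)^2 - f a * (f y)^2"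
proof -
  have m: "f (u * v) = f u * f v" if "u \<in> L" "v \<in> L" for u v using f that by blast
  have "a * (y * y) \<in> L" "x * x - a * (y * y) \<in> L"
    using x y a by (auto intro: subfield_mult subfield_diff L)
  then have "f (x * x - a * (y * y) + a * (y * y)) = f (x * x - a * (y * y)) + f (a * (y * y))"
    using f by blast
  then have "f (x * x - a * (y * y)) + f (a * (y * y)) = f (x * x)" by simp
  then show ?thesis
    unfolding power2_eq_square using m x y a subfield_mult[OF L y y] by (simp add: eq_diff_eq)
qed

lemma quat_class_zero_if_k_unirational:
  fixes k :: "'K::field set" and s t b :: "nat \<Rightarrow> 'K"
  assumes k: "is_subfield k" and inf: "infinite k" and two: "(2::'K) \<noteq> 0"
    and a: "a \<in> k" "a \<noteq> 0"
    and b: "\<forall>i\<in>I. b i \<in> k \<and> b i \<noteq> 0" and eq: "\<forall>i\<in>I. (s i)^2 - a * (t i)^2 = b i"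
    and U: "k_unirational k (gen_field (k \<union> s ` I \<union> t ` I))"
  shows "\<forall>i\<in>I. quat_class_zero k a (b i)"
proof
  fix i assume i: "i \<in> I"
  define L where "L = gen_field (k \<union> s ` I \<union> t ` I)"
  have L: "is_subfield L" unfolding L_def by (rule gen_field_subfield)
  have kL: "k \<subseteq> L" and stL: "s i \<in> L" "t i \<in> L"
    using gen_field_incl[of "k \<union> s ` I \<union> t ` I"] i unfolding L_def by auto
  obtain R f where Rf: "k_rational (bconst ` k) R" "f ` L \<subseteq> R"
      "\<forall>x\<in>L. \<forall>y\<in>L. f (x + y) = f x + f y \<and> f (x * y) = f x * f y" "\<forall>c\<in>k. f c = bconst c"
    using U unfolding k_unirational_def L_def by blast
  obtain B where B: "finite B" "alg_indep (bconst ` k) B" "R = gen_field (bconst ` k \<union> B)"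
    using Rf(1) unfolding k_rational_def by blast
  have "(s i)^2 - a * (t i)^2 = b i" "a \<in> L" "b i \<in> k" using eq b i a(1) kL by auto
  then have eq': "(f (s i))^2 - bconst a * (f (t i))^2 = bconst (b i)"
    using additive_multiplicative_conic[OF L Rf(3) stL \<open>a \<in> L\<close>] a(1) Rf(4) by simp
  have inf': "infinite (bconst ` k)"
    using inf finite_imageD[of bconst k] inj_on_subset[OF bconst_inj] by blast
  have "f (s i) \<in> gen_field (bconst ` k \<union> B)" "f (t i) \<in> gen_field (bconst ` k \<union> B)"
    using Rf(2) stL B(3) by auto
  from conic_point_if_purely_transcendental[OF B(1) subfield_image_bconst[OF k] inf' B(2)
      this _ _ eq'] obtain x y where "x \<in> bconst ` k" "y \<in> bconst ` k"
      "x^2 - bconst a * y^2 = bconst (b i)"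
    using a(1) \<open>b i \<in> k\<close> by blast
  then obtain p q where "p \<in> k" "q \<in> k" "bconst (p^2 - a * q^2) = bconst (b i)"
    by (auto simp: bconst_diff bconst_mult bconst_power)
  moreover from this have "p^2 - a * q^2 = b i" by (simp add: bconst_eq_iff)
  ultimately show "quat_class_zero k a (b i)"
    using quat_class_zero_if_conic_point[OF k two a(2,1)] b i by blast
qed

theorem theorem2p7:
  fixes k :: "'K::field set" and a :: 'K and n :: nat and b s t :: "nat \<Rightarrow> 'K"
  assumes "is_subfield k" and "infinite k" and "(2::'K) \<noteq> 0"
    and "a \<in> k" and "\<not> (\<exists>c\<in>k. a = c^2)"
    and "\<forall>i\<in>{1..n}. b i \<in> k \<and> b i \<noteq> 0"
    and "\<forall>i\<in>{1..n}. (s i)^2 - a * (t i)^2 = b i"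
    and "has_trdeg k (gen_field (k \<union> s ` {1..n} \<union> t ` {1..n})) n"
  shows "(k_rational k (gen_field (k \<union> s ` {1..n} \<union> t ` {1..n}))
            \<longleftrightarrow> (\<forall>i\<in>{1..n}. quat_class_zero k a (b i))) \<and>
         (stably_k_rational k (gen_field (k \<union> s ` {1..n} \<union> t ` {1..n}))
            \<longleftrightarrow> (\<forall>i\<in>{1..n}. quat_class_zero k a (b i))) \<and>
         (k_unirational k (gen_field (k \<union> s ` {1..n} \<union> t ` {1..n}))
            \<longleftrightarrow> (\<forall>i\<in>{1..n}. quat_class_zero k a (b i)))"
proof -
  let ?L = "gen_field (k \<union> s ` {1..n} \<union> t ` {1..n})"
  let ?Q = "\<forall>i\<in>{1..n}. quat_class_zero k a (b i)"
  have "?Q \<Longrightarrow> k_rational k ?L"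
    using k_rational_if_quat_class_zero[OF assms(1,3,4,5,6,7) _ _ assms(8)] by simp
  moreover have "a \<noteq> 0" using assms(1,5) subfield_0 by force
  then have "k_unirational k ?L \<Longrightarrow> ?Q"
    using quat_class_zero_if_k_unirational[OF assms(1-4) _ assms(6,7)] by blast
  ultimately show ?thesis
    using stably_k_rational_if_k_rational k_unirational_if_stably_k_rational by blast
qed

end
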